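(* Let $m>1$, let $[a,b]$ be the computational domain with mesh size $\Delta x=(b-a)/N_x$, cell centers $x_i=a+i\Delta x$ and interfaces $x_{i+1/2}=a+(i+1/2)\Delta x$, and time step $\Delta t$, $\lambda=\Delta t/\Delta x$. Given cell averages $\rho^n_i$, interface velocities $u^n_{i+1/2}$ and growth values $G^n_i$, the scheme proceeds as follows. (Prediction) $u^{n*}_{i+1/2}$ solves the linear system \[ \frac{u^{n*}_{i+1/2}-u^n_{i+1/2}}{\Delta t}=\frac{m}{\Delta x}\Big\{(\rho^n_{i+1})^{m-2}\Big(\frac{\rho^n_{i+3/2}u^{n*}_{i+3/2}-\rho^n_{i+1/2}u^{n*}_{i+1/2}}{\Delta x}-\rho^n_{i+1}G^n_i\Big)-(\rho^n_i)^{m-2}\Big(\frac{\rho^n_{i+1/2}u^{n*}_{i+1/2}-\rho^n_{i-1/2}u^{n*}_{i-1/2}}{\Delta x}-\rho^n_iG^n_i\Big)\Big\}, \] with $\rho^n_{i+1/2}=(\rho^n_i+\rho^n_{i+1})/2$. (Density update) \[ \frac{\rho^{n+1}_i-\rho^n_i}{\Delta t}+\frac{F^n_{i+1/2}-F^n_{i-1/2}}{\Delta x}=\rho^{n+1}_iG^n_i,\qquad F^n_{i+1/2}=\tfrac12\big[\rho^{Ln}_{i+1/2}u^{n*}_{i+1/2}+\rho^{Rn}_{i+1/2}u^{n*}_{i+1/2}-|u^{n*}_{i+1/2}|(\rho^{Rn}_{i+1/2}-\rho^{Ln}_{i+1/2})\big], \] where $\rho^{Ln}_{i+1/2}=\rho^n_i+\frac{\Delta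 x}{2}(\partial_x\rho)^n_i$, $\rho^{Rn}_{i+1/2}=\rho^n_{i+1}-\frac{\Delta x}{2}(\partial_x\rho)^n_{i+1}$, and the slope $(\partial_x\rho)^n_i$ is the minmod of $\frac{\rho^n_{i+1}-\rho^n_i}{\Delta x},\frac{\rho^n_{i+1}-\rho^n_{i-1}}{2\Delta x},\frac{\rho^n_i-\rho^n_{i-1}}{\Delta x}$ (the minimum if all three are positive, the maximum if all three are negative, and $0$ otherwise). (Correction) $u^{n+1}_{i+1/2}=-\frac{m}{m-1}\frac{(\rho^{n+1}_{i+1})^{m-1}-(\rho^{n+1}_i)^{m-1}}{\Delta x}$. Assume $0\le G^n_i\le G_{\max}$ for all $n,i$, and that there is a constant $U>0$ with $|u^{n*}_{i+1/2}|\le U$ for all $n,i$. Assume the initial cell averages satisfy $\rho^0_i\ge0$ for all $i$. If \[ \Delta t\le\frac{\Delta x}{2U}\qquad\text{and}\qquad 1-G_{\max}\Delta t>0, \] then $\rho^n_i\ge0$ for all $n\in\mathbb N$ and all $i$.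
   Context: This is a fully discrete scheme for the 1D cell density model $\partial_t\rho-\partial_x(\rho\,\partial_xp(\rho))=\rho G$, $p(\rho)=\frac{m}{m-1}\rho^{m-1}$, written with velocity $u=-\partial_xp(\rho)$ on a staggered grid ($\rho$ as cell averages, $u$ at cell interfaces). The paper phrases the velocity bound as $\max_{n,j}u^{n*}_{j+1/2}\le U$; the bound is used on the magnitude $|u^{n*}_{j+1/2}|$. *)

theory Defs
  imports Complex_Main
begin

definition minmod3 :: "real \<Rightarrow> real \<Rightarrow> real \<Rightarrow> real" where
  "minmod3 p q r =
     (if p > 0 \<and> q > 0 \<and> r > 0 then min p (min q r)
      else if p < 0 \<and> q < 0 \<and> r < 0 then max p (max q r)
      else 0)"

text \<open>Grid functions are indexed by integers; for interface quantities,
  index i stands for the interface x_{i+1/2}.\<close>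

definition slope :: "real \<Rightarrow> (int \<Rightarrow> real) \<Rightarrow> int \<Rightarrow> real" where
  "slope dx r i = minmod3 ((r (i+1) - r i) / dx) ((r (i+1) - r (i-1)) / (2*dx))
                          ((r i - r (i-1)) / dx)"

definition rhoL :: "real \<Rightarrow> (int \<Rightarrow> real) \<Rightarrow> int \<Rightarrow> real" where
  "rhoL dx r i = r i + dx / 2 * slope dx r i"

definition rhoR :: "real \<Rightarrow> (int \<Rightarrow> real) \<Rightarrow> int \<Rightarrow> real" where
  "rhoR dx r i = r (i+1) - dx / 2 * slope dx r (i+1)"

definition flux :: "real \<Rightarrow> (int \<Rightarrow> real) \<Rightarrow> (int \<Rightarrow> real) \<Rightarrow> int \<Rightarrow> real" where
  "flux dx r v i = (rhoL dx r i * v i + rhoR dx r i * v i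
                    - \<bar>v i\<bar> * (rhoR dx r i - rhoL dx r i)) / 2"

definition rhoHalf :: "(int \<Rightarrow> real) \<Rightarrow> int \<Rightarrow> real" where
  "rhoHalf r i = (r i + r (i+1)) / 2"

end

theory Submission
  imports Defs
begin

text \<open>The minmod limiter keeps the reconstructed interface values between 0 and twice the
  cell average, so they stay nonnegative; the upwind flux then leaves cell i at speed at most
  U and the incoming flux is nonnegative, so under the CFL condition the explicit part of the
  update is a nonnegative multiple of the old density. The implicit growth term only divides
  by 1 - G dt > 0.\<close>

lemma min_0_left_le_minmod3: "min 0 p \<le> minmod3 p q s"
  by (auto simp: minmod3_def)

lemma minmod3_le_max_0_right: "minmod3 p q s \<le> max 0 s"
  by (auto simp: minmod3_def)

lemma abs_slope_le:
  assumes dx: "dx > 0" and r: "\<And>j. r j \<ge> 0"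
  shows "\<bar>dx * slope dx r i\<bar> \<le> r i"
proof -
  have "- r i \<le> dx * min 0 ((r (i+1) - r i) / dx)"
    using dx r[of "i+1"] r[of i] by (auto simp: min_def)
  also have "\<dots> \<le> dx * slope dx r i"
    unfolding slope_def using dx by (intro mult_left_mono min_0_left_le_minmod3) auto
  finally have lower: "- r i \<le> dx * slope dx r i" .
  have "dx * slope dx r i \<le> dx * max 0 ((r i - r (i-1)) / dx)"
    unfolding slope_def using dx by (intro mult_left_mono minmod3_le_max_0_right) auto
  also have "\<dots> \<le> r i"
    using dx r[of "i-1"] r[of i] by (auto simp: max_def)
  finally show ?thesis using lower by linarith
qed

lemma rhoL_nonneg:
  assumes "dx > 0" and "\<And>j. r j \<ge> 0"
  shows "rhoL dx r i \<ge> 0"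
  using abs_slope_le[of dx r i] assms unfolding rhoL_def by (simp add: abs_le_iff)

lemma rhoR_nonneg:
  assumes "dx > 0" and "\<And>j. r j \<ge> 0"
  shows "rhoR dx r i \<ge> 0"
  using abs_slope_le[of dx r "i+1"] assms unfolding rhoR_def by (simp add: abs_le_iff)

lemma flux_le:
  assumes "rhoL dx r i \<ge> 0" "rhoR dx r i \<ge> 0" "\<bar>v i\<bar> \<le> U"
  shows "flux dx r v i \<le> U * rhoL dx r i"
proof (cases "v i \<ge> 0")
  case True
  then have "flux dx r v i = rhoL dx r i * v i" by (simp add: flux_def algebra_simps)
  also have "\<dots> \<le> rhoL dx r i * U" using assms by (intro mult_left_mono) auto
  finally show ?thesis by (simp add: mult.commute)
next
  case False
  then have "flux dx r v i = rhoR dx r i * v i" by (simp add: flux_def algebra_simps)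
  also have "\<dots> \<le> 0" using assms False by (simp add: mult_nonneg_nonpos)
  also have "0 \<le> U * rhoL dx r i" using assms by simp
  finally show ?thesis .
qed

lemma flux_ge:
  assumes "rhoL dx r i \<ge> 0" "rhoR dx r i \<ge> 0" "\<bar>v i\<bar> \<le> U"
  shows "flux dx r v i \<ge> - U * rhoR dx r i"
proof (cases "v i \<ge> 0")
  case True
  then have "flux dx r v i = rhoL dx r i * v i" by (simp add: flux_def algebra_simps)
  moreover have "rhoL dx r i * v i \<ge> 0" using assms True by simp
  moreover have "- U * rhoR dx r i \<le> 0" using assms by simp
  ultimately show ?thesis by linarith
next
  case False
  then have "flux dx r v i = rhoR dx r i * v i" by (simp add: flux_def algebra_simps)
  moreover have "rhoR dx r i * (- v i) \<le> rhoR dx r i * U"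
    using assms False by (intro mult_left_mono) auto
  ultimately show ?thesis by (simp add: algebra_simps)
qed

lemma flux_diff_le:
  assumes dx: "dx > 0" and r: "\<And>j. r j \<ge> 0" and v: "\<And>j. \<bar>v j\<bar> \<le> U"
  shows "flux dx r v i - flux dx r v (i-1) \<le> 2 * U * r i"
proof -
  have nonneg: "rhoL dx r j \<ge> 0" "rhoR dx r j \<ge> 0" for j
    using rhoL_nonneg[OF dx r] rhoR_nonneg[OF dx r] by auto
  have "flux dx r v i - flux dx r v (i-1) \<le> U * (rhoL dx r i + rhoR dx r (i-1))"
    using flux_le[of dx r i v U] flux_ge[of dx r "i-1" v U] nonneg v
    by (simp add: distrib_left)
  also have "rhoL dx r i + rhoR dx r (i-1) = 2 * r i"
    by (simp add: rhoL_def rhoR_def)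
  finally show ?thesis by simp
qed

lemma implicit_growth_update_nonneg:
  fixes r r' D g dt dx U :: real
  assumes upd: "(r' - r) / dt + D / dx = r' * g"
    and dt: "dt > 0" and dx: "dx > 0" and r: "r \<ge> 0"
    and D: "D \<le> 2 * U * r" and cfl: "dt \<le> dx / (2 * U)" and U: "U > 0"
    and growth: "1 - g * dt > 0"
  shows "r' \<ge> 0"
proof -
  have "dt * ((r' - r) / dt + D / dx) = dt * (r' * g)" using upd by simp
  then have "r' - r + dt / dx * D = r' * (g * dt)" using dt by (simp add: distrib_left)
  then have eq: "r' * (1 - g * dt) = r - dt / dx * D" by (simp add: algebra_simps)
  have "dt / dx * D \<le> dt / dx * (2 * U * r)"
    using D dt dx by (intro mult_left_mono) auto
  also have "\<dots> = (dt / dx * (2 * U)) * r" by simp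
  also have "\<dots> \<le> 1 * r"
  proof (rule mult_right_mono[OF _ r])
    show "dt / dx * (2 * U) \<le> 1" using cfl U dx by (simp add: field_simps)
  qed
  finally have "r' * (1 - g * dt) \<ge> 0" using eq by simp
  then show ?thesis using growth by (simp add: zero_le_mult_iff)
qed

theorem mainTheorem3:
  fixes m a b dt U Gmax :: real and Nx :: nat
    and rho u ustar G :: "nat \<Rightarrow> int \<Rightarrow> real"
  assumes m: "m > 1"
    and ab: "a < b" and Nx: "Nx > 0"
    and dt: "dt > 0"
    and prediction: "\<And>n i. (ustar n i - u n i) / dt =
        m / ((b - a) / real Nx) *
        ((rho n (i+1)) powr (m - 2) *
           ((rhoHalf (rho n) (i+1) * ustar n (i+1) - rhoHalf (rho n) i * ustar n i) / ((b - a) / real Nx)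
            - rho n (i+1) * G n i)
         - (rho n i) powr (m - 2) *
           ((rhoHalf (rho n) i * ustar n i - rhoHalf (rho n) (i-1) * ustar n (i-1)) / ((b - a) / real Nx)
            - rho n i * G n i))"
    and update: "\<And>n i. (rho (Suc n) i - rho n i) / dt
        + (flux ((b - a) / real Nx) (rho n) (ustar n) i
           - flux ((b - a) / real Nx) (rho n) (ustar n) (i-1)) / ((b - a) / real Nx)
        = rho (Suc n) i * G n i"
    and correction: "\<And>n i. u (Suc n) i =
        - (m / (m - 1)) * ((rho (Suc n) (i+1)) powr (m - 1) - (rho (Suc n) i) powr (m - 1))
          / ((b - a) / real Nx)"
    and G: "\<And>n i. 0 \<le> G n i \<and> G n i \<le> Gmax"
    and U: "U > 0" and ubound: "\<And>n i. \<bar>ustar n i\<bar> \<le> U"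
    and init: "\<And>i. rho 0 i \<ge> 0"
    and cfl: "dt \<le> ((b - a) / real Nx) / (2 * U)"
    and growth: "1 - Gmax * dt > 0"
  shows "\<forall>n i. rho n i \<ge> 0"
proof
  have dx: "(b - a) / real Nx > 0" using ab Nx by simp
  have growth_ni: "1 - G n i * dt > 0" for n i
    using growth mult_right_mono[of "G n i" Gmax dt] G[of n i] dt by linarith
  fix n show "\<forall>i. rho n i \<ge> 0"
  proof (induction n)
    case 0
    then show ?case using init by simp
  next
    case (Suc n)
    then have "rho (Suc n) i \<ge> 0" for i
      using implicit_growth_update_nonneg[OF update dt dx _ flux_diff_le[OF dx _ ubound] cfl U
          growth_ni]
      by simp
    then show ?case by simp
  qed
qed

end
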